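(* Let $a^*$ and $b^*$ be the right and left endpoints (possibly infinite) of the interval $\mathbf{R}_j$. Then: - $a^*\notin\mathbf{R}_j$ if and only if $m_{j,0}((c,a^* ))=\infty$ for every $c\in(b^*,a^* )$; - $b^*\notin\mathbf{R}_j$ if and only if $m_{j,0}((b^*,c))=\infty$ for every $c\in(b^*,a^* )$.
   Context: Let $m$ be Lebesgue measure. Let $G\subset\mathbf{R}$ be open such that $m(G\cap(a,b))>0$ for every nonempty bounded open interval $(a,b)$, and let $F=\mathbf{R}\setminus G$ satisfy $m(F)>0$ and have no isolated points. Assume $m(G)=\infty$. Write $G=\bigcup_{n\ge1}I_n$, where $I_n=(a_n,b_n)$ are its disjoint components, and let $H=\{a_n,b_n:n\ge1\}\setminus\{\pm\infty\}$. Fix $z\in F\setminus H$ and define $j(x)=\int_z^x1_F(t)\,dt$ for $x\in\mathbf{R}$. Then $j$ is nondecreasing, $\mathbf{R}_j:=j(\mathbf{R})$ is an interval, and $j$ is constant exactly on each closure $\bar I_n$; write $p_n^*=j(\bar I_n)$. Let $m_j=m\circ j^{-1}$ be the image measure on $\mathbf{R}_j$, $\mathbf{R}_{j,0}$ the interior of $\mathbf{R}_j$, and $m_{j,0}=m_j|_{\mathbf{R}_{j,0}}$. *)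

theory Defs
  imports "HOL-Analysis.Analysis"
begin

definition comp_endpoints :: "real set \<Rightarrow> real set" where
  "comp_endpoints G =
     {Inf C | C. C \<in> components G \<and> bdd_below C} \<union>
     {Sup C | C. C \<in> components G \<and> bdd_above C}"

definition jfun :: "real set \<Rightarrow> real \<Rightarrow> real \<Rightarrow> real" where
  "jfun F z x = (LBINT t=ereal z..ereal x. indicator F t)"

end

theory Submission imports Defs begin

text \<open>
  Only two facts about \<open>j\<close> are needed, and they use only that \<open>F\<close> is closed with
  \<open>m(F) > 0\<close>: \<open>j\<close> is nondecreasing and 1-Lipschitz, and it is not constant. Its range is
  then an interval whose interior is the open interval between \<open>b\<^sup>*\<close> and \<open>a\<^sup>*\<close>, so
  \<open>m\<^sub>j\<^sub>,\<^sub>0((c,a\<^sup>*))\<close> is the Lebesgue measure of \<open>j\<^sup>-\<^sup>1((c,a\<^sup>*))\<close>. If \<open>a\<^sup>*\<close> is not attained,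
  this preimage contains a half-line and has infinite measure; if \<open>a\<^sup>* = j(x\<^sub>0)\<close>,
  monotonicity traps it in a bounded interval ending at \<open>x\<^sub>0\<close>.
\<close>

lemma emeasure_lborel_atLeast [simp]: "emeasure lborel {a::real..} = \<infinity>"
proof -
  have "ennreal (real n) \<le> emeasure lborel {a..}" for n :: nat
    using emeasure_mono[of "{a..a + real n}" "{a..}" lborel] by simp
  then show ?thesis
    by (metis ennreal_Ex_less_of_nat ennreal_of_nat_eq_real_of_nat
        infinity_ennreal_def leD top.not_eq_extremum)
qed

lemma emeasure_lborel_atMost [simp]: "emeasure lborel {..a::real} = \<infinity>"
proof -
  have "ennreal (real n) \<le> emeasure lborel {..a}" for n :: nat
    using emeasure_mono[of "{a - real n..a}" "{..a}" lborel] by simp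
  then show ?thesis
    by (metis ennreal_Ex_less_of_nat ennreal_of_nat_eq_real_of_nat
        infinity_ennreal_def leD top.not_eq_extremum)
qed

lemma interval_integrable_indicator:
  assumes "F \<in> sets borel"
  shows "interval_lebesgue_integrable lborel (ereal a) (ereal b) (indicator F :: real \<Rightarrow> real)"
proof -
  have "set_integrable lborel {x<..<y} (indicator F :: real \<Rightarrow> real)" for x y :: real
  proof -
    have "(\<lambda>t. indicator {x<..<y} t *\<^sub>R (indicator F t :: real)) = indicator ({x<..<y} \<inter> F)"
      by (auto simp: indicator_def)
    moreover have "emeasure lborel ({x<..<y} \<inter> F) < \<infinity>"
      using emeasure_mono[of "{x<..<y} \<inter> F" "{x<..<y}" lborel] emeasure_lborel_box_finite[of x y]
      by (simp add: box_real)
    ultimately show ?thesis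
      using assms unfolding set_integrable_def by (auto intro!: integrable_real_indicator)
  qed
  then show ?thesis
    unfolding interval_lebesgue_integrable_def by simp
qed

lemma jfun_diff_eq_measure:
  assumes "F \<in> sets borel" "x \<le> y"
  shows "jfun F z y - jfun F z x = measure lborel (F \<inter> {x<..<y})"
proof -
  have "jfun F z y - jfun F z x = (LBINT t=ereal x..ereal y. indicator F t)"
    unfolding jfun_def using interval_integrable_indicator[OF assms(1)]
    by (metis interval_integral_sum min_def max_def add_diff_cancel_left')
  also have "\<dots> = (LINT t|lborel. indicator (F \<inter> {x<..<y}) t :: real)"
    unfolding interval_lebesgue_integral_def set_lebesgue_integral_def using assms(2)
    by (auto intro!: Bochner_Integration.integral_cong simp: indicator_def)
  also have "\<dots> = measure lborel (F \<inter> {x<..<y})"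
    using assms(1) by simp
  finally show ?thesis .
qed

lemma mono_jfun:
  assumes "F \<in> sets borel"
  shows "mono (jfun F z)"
proof (rule monoI)
  fix x y :: real assume "x \<le> y"
  then show "jfun F z x \<le> jfun F z y"
    using jfun_diff_eq_measure[OF assms, of x y z] measure_nonneg[of lborel "F \<inter> {x<..<y}"] by linarith
qed

lemma lipschitz_on_jfun:
  assumes "F \<in> sets borel"
  shows "1-lipschitz_on UNIV (jfun F z)"
proof (rule lipschitz_onI)
  have "jfun F z y - jfun F z x \<le> y - x" if "x \<le> y" for x y
  proof -
    have "measure lborel (F \<inter> {x<..<y}) \<le> measure lborel {x<..<y}"
      using assms fmeasurable_box[of x y] by (intro measure_mono_fmeasurable) auto
    then show ?thesis
      using jfun_diff_eq_measure[OF assms that] that by simp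
  qed
  moreover have "jfun F z x \<le> jfun F z y" if "x \<le> y" for x y
    using mono_jfun[OF assms] that by (rule monoD)
  ultimately show "dist (jfun F z x) (jfun F z y) \<le> 1 * dist x y" for x y
    unfolding dist_real_def by (smt (verit) abs_le_iff)
qed simp

lemma ex_jfun_less:
  assumes "F \<in> sets borel" "emeasure lborel F > 0"
  shows "\<exists>x y. jfun F z x < jfun F z y"
proof -
  let ?F = "\<lambda>n::nat. F \<inter> {- real n<..<real n}"
  have "(\<Union>n. ?F n) = F"
  proof (intro equalityI subsetI)
    fix x assume "x \<in> F"
    obtain n :: nat where "\<bar>x\<bar> < real n"
      using reals_Archimedean2 by blast
    with \<open>x \<in> F\<close> show "x \<in> (\<Union>n. ?F n)"
      by (intro UN_I[of n]) (auto simp: abs_less_iff)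
  qed auto
  moreover have "incseq ?F"
    by (auto simp: incseq_def)
  ultimately have "(SUP n. emeasure lborel (?F n)) = emeasure lborel F"
    using assms(1) by (subst SUP_emeasure_incseq) auto
  with assms(2) have "0 < (SUP n. emeasure lborel (?F n))"
    by simp
  then obtain n where "emeasure lborel (?F n) > 0"
    by (auto simp: less_SUP_iff)
  moreover have "emeasure lborel (?F n) < \<infinity>"
  proof -
    have "emeasure lborel (?F n) \<le> ennreal (2 * real n)"
      using emeasure_mono[of "?F n" "{- real n<..<real n}" lborel] by simp
    then show ?thesis
      unfolding infinity_ennreal_def using ennreal_less_top by (rule order.strict_trans1)
  qed
  ultimately have "measure lborel (?F n) > 0"
    by (simp add: emeasure_eq_ennreal_measure)
  then have "jfun F z (- real n) < jfun F z (real n)"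
    using jfun_diff_eq_measure[OF assms(1), of "- real n" "real n" z] by simp
  then show ?thesis by blast
qed

lemma interior_range_continuous:
  fixes j :: "real \<Rightarrow> real"
  assumes "continuous_on UNIV j"
  shows "interior (range j) = {y. (INF x. ereal (j x)) < ereal y \<and> ereal y < (SUP x. ereal (j x))}"
proof (intro set_eqI iffI; clarsimp)
  fix y assume "y \<in> interior (range j)"
  then obtain e where "e > 0" "ball y e \<subseteq> range j"
    using mem_interior by blast
  moreover have "y - e/2 \<in> ball y e" "y + e/2 \<in> ball y e"
    using \<open>e > 0\<close> by (auto simp: dist_real_def)
  ultimately obtain x1 x2 where "j x1 = y - e/2" "j x2 = y + e/2"
    by (metis rangeE subsetD)
  with \<open>e > 0\<close> have "ereal (j x1) < ereal y" "ereal y < ereal (j x2)"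
    by auto
  then show "(INF x. ereal (j x)) < ereal y \<and> ereal y < (SUP x. ereal (j x))"
    by (auto simp: INF_less_iff less_SUP_iff)
next
  fix y assume "(INF x. ereal (j x)) < ereal y" "ereal y < (SUP x. ereal (j x))"
  then obtain x1 x2 where "j x1 < y" "y < j x2"
    by (auto simp: INF_less_iff less_SUP_iff)
  moreover have "connected (range j)"
    using assms connected_continuous_image connected_UNIV by blast
  ultimately have "{j x1<..<j x2} \<subseteq> range j"
    unfolding connected_iff_interval by (meson greaterThanLessThan_iff less_imp_le rangeI subsetI)
  moreover have "y \<in> {j x1<..<j x2}"
    using \<open>j x1 < y\<close> \<open>y < j x2\<close> by simp
  ultimately show "y \<in> interior (range j)"
    using interior_maximal[OF _ open_greaterThanLessThan] by blast
qed

lemma emeasure_distr_interior_range: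
  fixes j :: "real \<Rightarrow> real"
  assumes "mono j" "continuous_on UNIV j" "A \<in> sets borel"
    and "A \<subseteq> {y. (INF x. ereal (j x)) < ereal y \<and> ereal y < (SUP x. ereal (j x))}"
  shows "emeasure (distr lborel borel j) (A \<inter> interior (range j)) = emeasure lborel (j -` A)"
proof -
  have "A \<inter> interior (range j) = A"
    using assms(4) interior_range_continuous[OF assms(2)] by auto
  then show ?thesis
    using assms(1,3) by (simp add: emeasure_distr borel_measurable_mono)
qed

lemma emeasure_vimage_below_Sup:
  fixes j :: "real \<Rightarrow> real"
  defines "a \<equiv> SUP x. ereal (j x)"
  assumes "mono j" "(INF x. ereal (j x)) < ereal c" "ereal c < a"
  shows "emeasure lborel (j -` {y. ereal c < ereal y \<and> ereal y < a}) = \<infinity> \<longleftrightarrow> a \<notin> ereal ` range j"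
proof
  assume "a \<notin> ereal ` range j"
  then have below_a: "ereal (j x) < a" for x
  proof -
    have "ereal (j x) \<le> a"
      unfolding a_def by (rule SUP_upper) simp
    moreover have "ereal (j x) \<noteq> a"
      using \<open>a \<notin> ereal ` range j\<close> by auto
    ultimately show ?thesis by simp
  qed
  obtain x0 where "c < j x0"
    using assms(4) by (auto simp: a_def less_SUP_iff)
  have "{x0..} \<subseteq> j -` {y. ereal c < ereal y \<and> ereal y < a}"
  proof
    fix x assume "x \<in> {x0..}"
    then have "c < j x"
      using monoD[OF \<open>mono j\<close>, of x0 x] \<open>c < j x0\<close> by simp
    with below_a show "x \<in> j -` {y. ereal c < ereal y \<and> ereal y < a}"
      by simp
  qed
  moreover have "{y. ereal c < ereal y \<and> ereal y < a} \<in> sets borel"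
    by measurable
  then have "j -` {y. ereal c < ereal y \<and> ereal y < a} \<in> sets borel"
    by (rule measurable_sets_borel[OF borel_measurable_mono[OF \<open>mono j\<close>]])
  ultimately show "emeasure lborel (j -` {y. ereal c < ereal y \<and> ereal y < a}) = \<infinity>"
    using emeasure_mono[of "{x0..}" _ lborel] by (simp add: top_unique)
next
  assume infinite: "emeasure lborel (j -` {y. ereal c < ereal y \<and> ereal y < a}) = \<infinity>"
  show "a \<notin> ereal ` range j"
  proof
    assume "a \<in> ereal ` range j"
    then obtain x0 where x0: "a = ereal (j x0)" by auto
    obtain x1 where x1: "j x1 < c"
      using assms(3) by (auto simp: INF_less_iff)
    have bounded: "j -` {y. ereal c < ereal y \<and> ereal y < a} \<subseteq> {x1..x0}"
    proof
      fix x assume "x \<in> j -` {y. ereal c < ereal y \<and> ereal y < a}"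
      then have "c < j x" "j x < j x0"
        using x0 by auto
      then show "x \<in> {x1..x0}"
        using x1 monoD[OF \<open>mono j\<close>, of x x1] monoD[OF \<open>mono j\<close>, of x0 x]
        by (cases "x \<le> x1"; cases "x0 \<le> x") auto
    qed
    show False
      using infinite emeasure_mono[OF bounded, of lborel] emeasure_lborel_cbox_finite[of x1 x0]
      by (simp add: top_unique)
  qed
qed

lemma emeasure_vimage_above_Inf:
  fixes j :: "real \<Rightarrow> real"
  defines "b \<equiv> INF x. ereal (j x)"
  assumes "mono j" "b < ereal c" "ereal c < (SUP x. ereal (j x))"
  shows "emeasure lborel (j -` {y. b < ereal y \<and> ereal y < ereal c}) = \<infinity> \<longleftrightarrow> b \<notin> ereal ` range j"
proof
  assume "b \<notin> ereal ` range j"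
  then have above_b: "b < ereal (j x)" for x
  proof -
    have "b \<le> ereal (j x)"
      unfolding b_def by (rule INF_lower) simp
    moreover have "ereal (j x) \<noteq> b"
      using \<open>b \<notin> ereal ` range j\<close> by auto
    ultimately show ?thesis by simp
  qed
  obtain x0 where "j x0 < c"
    using assms(3) by (auto simp: b_def INF_less_iff)
  have "{..x0} \<subseteq> j -` {y. b < ereal y \<and> ereal y < ereal c}"
  proof
    fix x assume "x \<in> {..x0}"
    then have "j x < c"
      using monoD[OF \<open>mono j\<close>, of x x0] \<open>j x0 < c\<close> by simp
    with above_b show "x \<in> j -` {y. b < ereal y \<and> ereal y < ereal c}"
      by simp
  qed
  moreover have "{y. b < ereal y \<and> ereal y < ereal c} \<in> sets borel"
    by measurable
  then have "j -` {y. b < ereal y \<and> ereal y < ereal c} \<in> sets borel"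
    by (rule measurable_sets_borel[OF borel_measurable_mono[OF \<open>mono j\<close>]])
  ultimately show "emeasure lborel (j -` {y. b < ereal y \<and> ereal y < ereal c}) = \<infinity>"
    using emeasure_mono[of "{..x0}" _ lborel] by (simp add: top_unique)
next
  assume infinite: "emeasure lborel (j -` {y. b < ereal y \<and> ereal y < ereal c}) = \<infinity>"
  show "b \<notin> ereal ` range j"
  proof
    assume "b \<in> ereal ` range j"
    then obtain x0 where x0: "b = ereal (j x0)" by auto
    obtain x1 where x1: "c < j x1"
      using assms(4) by (auto simp: less_SUP_iff)
    have bounded: "j -` {y. b < ereal y \<and> ereal y < ereal c} \<subseteq> {x0..x1}"
    proof
      fix x assume "x \<in> j -` {y. b < ereal y \<and> ereal y < ereal c}"
      then have "j x0 < j x" "j x < c"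
        using x0 by auto
      then show "x \<in> {x0..x1}"
        using x1 monoD[OF \<open>mono j\<close>, of x1 x] monoD[OF \<open>mono j\<close>, of x x0]
        by (cases "x \<le> x0"; cases "x1 \<le> x") auto
    qed
    show False
      using infinite emeasure_mono[OF bounded, of lborel] emeasure_lborel_cbox_finite[of x0 x1]
      by (simp add: top_unique)
  qed
qed

lemma Sup_notin_range_iff_emeasure_distr:
  fixes j :: "real \<Rightarrow> real"
  defines "a \<equiv> SUP x. ereal (j x)" and "b \<equiv> INF x. ereal (j x)"
  assumes "mono j" "continuous_on UNIV j" "b < a"
  shows "a \<notin> ereal ` range j \<longleftrightarrow>
    (\<forall>c. b < ereal c \<and> ereal c < a \<longrightarrow>
       emeasure (distr lborel borel j) ({y. ereal c < ereal y \<and> ereal y < a} \<inter> interior (range j)) = \<infinity>)"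
proof -
  have iff_c: "emeasure (distr lborel borel j) ({y. ereal c < ereal y \<and> ereal y < a} \<inter> interior (range j)) = \<infinity>
      \<longleftrightarrow> a \<notin> ereal ` range j" if "b < ereal c" "ereal c < a" for c
  proof -
    have "{y. ereal c < ereal y \<and> ereal y < a} \<in> sets borel"
      by measurable
    moreover have "{y. ereal c < ereal y \<and> ereal y < a} \<subseteq> {y. b < ereal y \<and> ereal y < a}"
      using order.strict_trans[OF \<open>b < ereal c\<close>] by auto
    ultimately show ?thesis
      using emeasure_distr_interior_range[OF assms(3,4), folded a_def b_def]
        emeasure_vimage_below_Sup[OF assms(3), folded a_def b_def, OF that]
      by simp
  qed
  obtain c where "b < ereal c" "ereal c < a"
    using ereal_dense2[OF \<open>b < a\<close>] by blast
  with iff_c show ?thesis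
    by blast
qed

lemma Inf_notin_range_iff_emeasure_distr:
  fixes j :: "real \<Rightarrow> real"
  defines "a \<equiv> SUP x. ereal (j x)" and "b \<equiv> INF x. ereal (j x)"
  assumes "mono j" "continuous_on UNIV j" "b < a"
  shows "b \<notin> ereal ` range j \<longleftrightarrow>
    (\<forall>c. b < ereal c \<and> ereal c < a \<longrightarrow>
       emeasure (distr lborel borel j) ({y. b < ereal y \<and> ereal y < ereal c} \<inter> interior (range j)) = \<infinity>)"
proof -
  have iff_c: "emeasure (distr lborel borel j) ({y. b < ereal y \<and> ereal y < ereal c} \<inter> interior (range j)) = \<infinity>
      \<longleftrightarrow> b \<notin> ereal ` range j" if "b < ereal c" "ereal c < a" for c
  proof -
    have "{y. b < ereal y \<and> ereal y < ereal c} \<in> sets borel"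
      by measurable
    moreover have "{y. b < ereal y \<and> ereal y < ereal c} \<subseteq> {y. b < ereal y \<and> ereal y < a}"
      using order.strict_trans[OF _ \<open>ereal c < a\<close>] by auto
    ultimately show ?thesis
      using emeasure_distr_interior_range[OF assms(3,4), folded a_def b_def]
        emeasure_vimage_above_Inf[OF assms(3), folded a_def b_def, OF that]
      by simp
  qed
  obtain c where "b < ereal c" "ereal c < a"
    using ereal_dense2[OF \<open>b < a\<close>] by blast
  with iff_c show ?thesis
    by blast
qed

theorem mainTheorem12:
  fixes G :: "real set" and z :: real
  assumes "open G"
    and "\<forall>a b. a < b \<longrightarrow> emeasure lborel (G \<inter> {a<..<b}) > 0"
    and "emeasure lborel (- G) > 0"
    and "\<forall>x\<in>- G. x islimpt (- G)"
    and "emeasure lborel G = \<infinity>"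
    and "z \<in> - G" and "z \<notin> comp_endpoints G"
  shows "let j = jfun (- G) z; Rj = range j;
             mj0 = (\<lambda>A. emeasure (distr lborel borel j) (A \<inter> interior Rj));
             astar = (SUP x. ereal (j x)); bstar = (INF x. ereal (j x))
         in (astar \<notin> ereal ` Rj \<longleftrightarrow>
               (\<forall>c. bstar < ereal c \<and> ereal c < astar \<longrightarrow>
                   mj0 {y. ereal c < ereal y \<and> ereal y < astar} = \<infinity>))
          \<and> (bstar \<notin> ereal ` Rj \<longleftrightarrow>
               (\<forall>c. bstar < ereal c \<and> ereal c < astar \<longrightarrow>
                   mj0 {y. bstar < ereal y \<and> ereal y < ereal c} = \<infinity>))"
proof -
  have F: "- G \<in> sets borel"
    using \<open>open G\<close> by (simp add: borel_closed closed_Compl)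
  define j where "j = jfun (- G) z"
  have "mono j"
    unfolding j_def using F by (rule mono_jfun)
  have "continuous_on UNIV j"
    unfolding j_def using lipschitz_on_jfun[OF F] by (rule lipschitz_on_continuous_on)
  obtain u v where "j u < j v"
    unfolding j_def using ex_jfun_less[OF F assms(3)] by blast
  have "(INF x. ereal (j x)) \<le> ereal (j u)"
    by (rule INF_lower) simp
  also have "\<dots> < ereal (j v)"
    using \<open>j u < j v\<close> by simp
  also have "\<dots> \<le> (SUP x. ereal (j x))"
    by (rule SUP_upper) simp
  finally have "(INF x. ereal (j x)) < (SUP x. ereal (j x))" .
  then show ?thesis
    unfolding Let_def j_def[symmetric]
    using Sup_notin_range_iff_emeasure_distr Inf_notin_range_iff_emeasure_distr
      \<open>mono j\<close> \<open>continuous_on UNIV j\<close> by blast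
qed

end
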